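(* Let $n\ge3$ and $\mathcal{A}\in\mathcal{R}_n$. Then $\operatorname{Ann}\mathcal{A}=\langle e_n\rangle$, and the automorphisms of $\mathcal{A}$ are exactly the linear maps $e_1\mapsto e_1+xe_n$, $e_i\mapsto e_i$ ($2\le i\le n$), with $x\in\mathbb{C}$.
   Context: Over $\mathbb{C}$, with basis $e_1,\dots,e_n$ and $e_ie_j=\sum_kc_{ij}^ke_k$. Condition ( * ): $c_{ij}^k=0$ whenever $k\le\max\{i,j\}$. For $n\ge3$, $\mathcal{R}_n$ is the family of algebra structures satisfying ( * ) with $e_i^2=e_{i+1}$ for $1\le i\le n-1$, $c_{21}^3=1$, $c_{1i}^{i+1}=0$ for $2\le i\le n-1$, and remaining structure constants $c_{ij}^k$ ($i\ne j$, $k>\max\{i,j\}$) arbitrary. $\operatorname{Ann}\mathcal{A}=\{a: a\mathcal{A}+\mathcal{A}a=0\}$. *)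

theory Defs
  imports Complex_Main
begin

text \<open>An n-dimensional algebra over the complex numbers with basis e_1,...,e_n is given by
  structure constants c i j k (meaning e_i e_j = sum_k c i j k e_k), indices in {1..n}.
  Elements are coordinate vectors a :: nat => complex vanishing outside {1..n}.\<close>

type_synonym sconst = "nat \<Rightarrow> nat \<Rightarrow> nat \<Rightarrow> complex"

definition vecs :: "nat \<Rightarrow> (nat \<Rightarrow> complex) set" where
  "vecs n = {a. \<forall>i. i \<notin> {1..n} \<longrightarrow> a i = 0}"

definition basis_vec :: "nat \<Rightarrow> nat \<Rightarrow> complex" where
  "basis_vec m = (\<lambda>i. if i = m then 1 else 0)"

definition amult :: "nat \<Rightarrow> sconst \<Rightarrow> (nat \<Rightarrow> complex) \<Rightarrow> (nat \<Rightarrow> complex) \<Rightarrow> (nat \<Rightarrow> complex)" where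
  "amult n c a b = (\<lambda>k. if k \<in> {1..n}
      then (\<Sum>i=1..n. \<Sum>j=1..n. a i * b j * c i j k) else 0)"

definition in_R :: "nat \<Rightarrow> sconst \<Rightarrow> bool" where
  "in_R n c \<longleftrightarrow>
     (\<forall>i\<in>{1..n}. \<forall>j\<in>{1..n}. \<forall>k\<in>{1..n}. k \<le> max i j \<longrightarrow> c i j k = 0)
   \<and> (\<forall>i\<in>{1..n-1}. \<forall>k\<in>{1..n}. c i i k = (if k = i + 1 then 1 else 0))
   \<and> c 2 1 3 = 1
   \<and> (\<forall>i\<in>{2..n-1}. c 1 i (i + 1) = 0)"

definition annihilator :: "nat \<Rightarrow> sconst \<Rightarrow> (nat \<Rightarrow> complex) set" where
  "annihilator n c = {a \<in> vecs n. \<forall>b\<in>vecs n. amult n c a b = (\<lambda>_. 0) \<and> amult n c b a = (\<lambda>_. 0)}"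

definition is_automorphism :: "nat \<Rightarrow> sconst \<Rightarrow> ((nat \<Rightarrow> complex) \<Rightarrow> (nat \<Rightarrow> complex)) \<Rightarrow> bool" where
  "is_automorphism n c f \<longleftrightarrow>
     bij_betw f (vecs n) (vecs n)
   \<and> (\<forall>a\<in>vecs n. \<forall>b\<in>vecs n. f (\<lambda>k. a k + b k) = (\<lambda>k. f a k + f b k))
   \<and> (\<forall>a\<in>vecs n. \<forall>t. f (\<lambda>k. t * a k) = (\<lambda>k. t * f a k))
   \<and> (\<forall>a\<in>vecs n. \<forall>b\<in>vecs n. f (amult n c a b) = amult n c (f a) (f b))"

end

theory Submission
  imports Defs
begin

text \<open>Under condition (*) a product of vectors vanishing below positions p and q vanishes
  up to position max p q, and its next coordinate only involves the leading coordinates of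
  the factors. Multiplying by e_m therefore reads off the m-th coordinate, which pins down
  the annihilator. For an automorphism f the images f(e_i) are triangular, since
  f(e_(i+1)) = f(e_i)^2, with diagonal entries d^(2^(i-1)) where d is the leading entry of
  f(e_1). Comparing third coordinates of f(e_1 e_2), f(e_2 e_1) with the products of the
  images kills the second entry of f(e_1) and forces d = 1; comparing coordinate m+1 of
  f(e_1 e_m) and f(e_1) f(e_m), using c_1m^(m+1) = 0, kills the remaining middle entries.
  What survives is the last entry of f(e_1), which no product ever sees.\<close>

definition strictly_ascending :: "nat \<Rightarrow> sconst \<Rightarrow> bool" where
  "strictly_ascending n c \<longleftrightarrow>
     (\<forall>i\<in>{1..n}. \<forall>j\<in>{1..n}. \<forall>k\<in>{1..n}. k \<le> max i j \<longrightarrow> c i j k = 0)"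

lemma strictly_ascendingD:
  "strictly_ascending n c \<Longrightarrow> i \<in> {1..n} \<Longrightarrow> j \<in> {1..n} \<Longrightarrow> k \<in> {1..n} \<Longrightarrow> k \<le> max i j
    \<Longrightarrow> c i j k = 0"
  unfolding strictly_ascending_def by blast

lemma in_R_strictly_ascending: "in_R n c \<Longrightarrow> strictly_ascending n c"
  unfolding in_R_def strictly_ascending_def by blast

lemma in_R_square_coeff: "in_R n c \<Longrightarrow> 1 \<le> i \<Longrightarrow> i < n \<Longrightarrow> c i i (Suc i) = 1"
  unfolding in_R_def by auto

lemma in_R_square_coeff_other:
  "in_R n c \<Longrightarrow> 1 \<le> i \<Longrightarrow> i < n \<Longrightarrow> k \<in> {1..n} \<Longrightarrow> k \<noteq> Suc i \<Longrightarrow> c i i k = 0"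
  unfolding in_R_def by auto

lemma in_R_coeff_213: "in_R n c \<Longrightarrow> c 2 1 3 = 1"
  unfolding in_R_def by auto

lemma in_R_coeff_1_next: "in_R n c \<Longrightarrow> 2 \<le> i \<Longrightarrow> i < n \<Longrightarrow> c 1 i (Suc i) = 0"
  unfolding in_R_def by auto

lemma zero_in_vecs: "(\<lambda>_. 0) \<in> vecs n"
  by (simp add: vecs_def)

lemma basis_vec_in_vecs: "m \<in> {1..n} \<Longrightarrow> basis_vec m \<in> vecs n"
  by (auto simp: vecs_def basis_vec_def)

lemma sum_basis_vec_coords: "a \<in> vecs n \<Longrightarrow> (\<Sum>i=1..n. a i * basis_vec i k) = a k"
proof -
  assume a: "a \<in> vecs n"
  have "(\<Sum>i=1..n. a i * basis_vec i k) = (\<Sum>i=1..n. if i = k then a k else 0)"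
    by (rule sum.cong) (auto simp: basis_vec_def)
  also have "\<dots> = a k" using a by (auto simp: vecs_def)
  finally show ?thesis .
qed

lemma additive_homogeneous_on_vecs_expand:
  assumes add: "\<And>a b. a \<in> vecs n \<Longrightarrow> b \<in> vecs n \<Longrightarrow> f (\<lambda>k. a k + b k) = (\<lambda>k. f a k + f b k)"
    and scale: "\<And>a t. a \<in> vecs n \<Longrightarrow> f (\<lambda>k. t * a k) = (\<lambda>k. t * f a k)"
    and a: "a \<in> vecs n"
  shows "f a = (\<lambda>k. \<Sum>i=1..n. a i * f (basis_vec i) k)"
proof -
  have partial_sums: "f (\<lambda>k. \<Sum>i=1..m. a i * basis_vec i k) = (\<lambda>k. \<Sum>i=1..m. a i * f (basis_vec i) k)"
    if "m \<le> n" for m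
    using that
  proof (induction m)
    case 0
    show ?case using scale[OF zero_in_vecs, of 0] by simp
  next
    case (Suc m)
    have b: "basis_vec (Suc m) \<in> vecs n" using Suc.prems by (intro basis_vec_in_vecs) auto
    have partial: "(\<lambda>k. \<Sum>i=1..m. a i * basis_vec i k) \<in> vecs n"
      using Suc.prems by (auto simp: vecs_def basis_vec_def)
    have "f (\<lambda>k. \<Sum>i=1..Suc m. a i * basis_vec i k)
        = f (\<lambda>k. (\<Sum>i=1..m. a i * basis_vec i k) + a (Suc m) * basis_vec (Suc m) k)"
      by simp
    also have "\<dots> = (\<lambda>k. f (\<lambda>k. \<Sum>i=1..m. a i * basis_vec i k) k
                        + f (\<lambda>k. a (Suc m) * basis_vec (Suc m) k) k)"
      using add[OF partial] b by (simp add: vecs_def)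
    also have "\<dots> = (\<lambda>k. \<Sum>i=1..Suc m. a i * f (basis_vec i) k)"
      using Suc scale[OF b] by simp
    finally show ?case .
  qed
  have "(\<lambda>k. \<Sum>i=1..n. a i * basis_vec i k) = a"
    by (rule ext) (rule sum_basis_vec_coords[OF a])
  then have "f a = f (\<lambda>k. \<Sum>i=1..n. a i * basis_vec i k)" by simp
  also have "\<dots> = (\<lambda>k. \<Sum>i=1..n. a i * f (basis_vec i) k)"
    by (rule partial_sums[OF order_refl])
  finally show ?thesis .
qed

lemma amult_in_vecs: "amult n c a b \<in> vecs n"
  by (simp add: vecs_def amult_def)

lemma amult_zero_left: "amult n c (\<lambda>_. 0) b = (\<lambda>_. 0)"
  by (rule ext) (simp add: amult_def)

lemma amult_zero_right: "amult n c a (\<lambda>_. 0) = (\<lambda>_. 0)"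
  by (rule ext) (simp add: amult_def)

lemma amult_eq_sum_over:
  assumes k: "k \<in> {1..n}" and S: "S \<subseteq> {1..n} \<times> {1..n}"
    and outside: "\<And>i j. i \<in> {1..n} \<Longrightarrow> j \<in> {1..n} \<Longrightarrow> (i, j) \<notin> S \<Longrightarrow> a i * b j * c i j k = 0"
  shows "amult n c a b k = (\<Sum>(i, j)\<in>S. a i * b j * c i j k)"
proof -
  have "amult n c a b k = (\<Sum>(i, j)\<in>{1..n} \<times> {1..n}. a i * b j * c i j k)"
    using k by (simp add: amult_def sum.cartesian_product)
  also have "\<dots> = (\<Sum>(i, j)\<in>S. a i * b j * c i j k)"
    by (rule sum.mono_neutral_right) (use S outside in auto)
  finally show ?thesis .
qed

lemma amult_basis_vec:
  assumes "i \<in> {1..n}" and "j \<in> {1..n}"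
  shows "amult n c (basis_vec i) (basis_vec j) = (\<lambda>k. if k \<in> {1..n} then c i j k else 0)"
proof (rule ext)
  fix k show "amult n c (basis_vec i) (basis_vec j) k = (if k \<in> {1..n} then c i j k else 0)"
  proof (cases "k \<in> {1..n}")
    case True
    have "amult n c (basis_vec i) (basis_vec j) k
        = (\<Sum>(i', j')\<in>{(i, j)}. basis_vec i i' * basis_vec j j' * c i' j' k)"
      by (rule amult_eq_sum_over[OF True]) (use assms in \<open>auto simp: basis_vec_def\<close>)
    then show ?thesis using True by (simp add: basis_vec_def)
  qed (auto simp: amult_def)
qed

lemma amult_eq_0_below:
  assumes c: "strictly_ascending n c" and a: "\<forall>i<p. a i = 0" and b: "\<forall>j<q. b j = 0"
    and k: "k \<le> max p q"
  shows "amult n c a b k = 0"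
proof (cases "k \<in> {1..n}")
  case True
  have "amult n c a b k = (\<Sum>(i, j)\<in>{}. a i * b j * c i j k)"
  proof (rule amult_eq_sum_over[OF True])
    fix i j assume i: "i \<in> {1..n}" and j: "j \<in> {1..n}"
    show "a i * b j * c i j k = 0"
    proof (cases "i < p \<or> j < q")
      case False
      then have "k \<le> max i j" using k by auto
      then show ?thesis using strictly_ascendingD[OF c i j True] by simp
    qed (use a b in auto)
  qed auto
  then show ?thesis by simp
qed (auto simp: amult_def)

lemma amult_cong_below:
  assumes c: "strictly_ascending n c" and a: "\<forall>i<n. a i = a' i" and b: "\<forall>j<n. b j = b' j"
  shows "amult n c a b = amult n c a' b'"
proof (rule ext)
  fix k
  show "amult n c a b k = amult n c a' b' k"
  proof (cases "k \<in> {1..n}")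
    case True
    have "a i * b j * c i j k = a' i * b' j * c i j k" if "i \<in> {1..n}" "j \<in> {1..n}" for i j
    proof (cases "i < n \<and> j < n")
      case False
      then have "k \<le> max i j" using True that by auto
      then show ?thesis using strictly_ascendingD[OF c that True] by simp
    qed (use a b in auto)
    then show ?thesis unfolding amult_def using True by (auto intro!: sum.cong)
  qed (auto simp: amult_def)
qed

lemma amult_next_coord_right:
  assumes c: "strictly_ascending n c" and m: "1 \<le> m" "m < n" and b: "\<forall>j<m. b j = 0"
  shows "amult n c a b (Suc m) = (\<Sum>i=1..m. a i * b m * c i m (Suc m))"
proof -
  have "amult n c a b (Suc m) = (\<Sum>(i, j)\<in>{1..m} \<times> {m}. a i * b j * c i j (Suc m))"
  proof (rule amult_eq_sum_over)
    fix i j assume i: "i \<in> {1..n}" and j: "j \<in> {1..n}" and S: "(i, j) \<notin> {1..m} \<times> {m}"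
    show "a i * b j * c i j (Suc m) = 0"
    proof (cases "j < m")
      case False
      then have "Suc m \<le> max i j" using S i by auto
      then show ?thesis using strictly_ascendingD[OF c i j] m by simp
    qed (use b in simp)
  qed (use m in auto)
  then show ?thesis by (simp add: sum.cartesian_product[symmetric])
qed

lemma amult_next_coord_left:
  assumes c: "strictly_ascending n c" and m: "1 \<le> m" "m < n" and a: "\<forall>i<m. a i = 0"
  shows "amult n c a b (Suc m) = (\<Sum>j=1..m. a m * b j * c m j (Suc m))"
proof -
  have "amult n c a b (Suc m) = (\<Sum>(i, j)\<in>{m} \<times> {1..m}. a i * b j * c i j (Suc m))"
  proof (rule amult_eq_sum_over)
    fix i j assume i: "i \<in> {1..n}" and j: "j \<in> {1..n}" and S: "(i, j) \<notin> {m} \<times> {1..m}"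
    show "a i * b j * c i j (Suc m) = 0"
    proof (cases "i < m")
      case False
      then have "Suc m \<le> max i j" using S j by auto
      then show ?thesis using strictly_ascendingD[OF c i j] m by simp
    qed (use a in simp)
  qed (use m in auto)
  then show ?thesis by (simp add: sum.cartesian_product[symmetric])
qed

lemma amult_square_basis_vec:
  assumes R: "in_R n c" and "1 \<le> i" and "i < n"
  shows "amult n c (basis_vec i) (basis_vec i) = basis_vec (Suc i)"
  using assms amult_basis_vec[of i n i c] in_R_square_coeff[OF R] in_R_square_coeff_other[OF R]
  by (auto simp: basis_vec_def)

lemma amult_next_coord_tail:
  assumes c: "strictly_ascending n c" and U: "\<And>l k. k < l \<Longrightarrow> l \<in> {1..n} \<Longrightarrow> U l k = (0::complex)"
    and ij: "i \<in> {1..n}" "j \<in> {1..n}" and k: "k = Suc (max i j)" "k \<le> n"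
  shows "(\<Sum>l=1..n. c i j l * U l k) = c i j k * U k k"
proof -
  have "c i j l * U l k = 0" if "l \<in> {1..n}" "l \<noteq> k" for l
  proof (cases "l < k")
    case True
    then show ?thesis using strictly_ascendingD[OF c ij that(1)] k by simp
  qed (use U that in auto)
  then have "(\<Sum>l=1..n. c i j l * U l k) = (\<Sum>l\<in>{k}. c i j l * U l k)"
    by (intro sum.mono_neutral_right) (use k in auto)
  then show ?thesis by simp
qed

lemma annihilator_R:
  assumes n: "n \<ge> 3" and R: "in_R n c"
  shows "annihilator n c = {(\<lambda>k. t * basis_vec n k) | t. True}"
proof
  have c: "strictly_ascending n c" using in_R_strictly_ascending[OF R] .
  show "annihilator n c \<subseteq> {(\<lambda>k. t * basis_vec n k) | t. True}"
  proof
    fix a assume ann: "a \<in> annihilator n c"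
    then have a: "a \<in> vecs n" by (simp add: annihilator_def)
    have below: "a m = 0" if "1 \<le> m" "m < n" for m
      using that
    proof (induction m rule: less_induct)
      case (less m)
      have "0 = amult n c a (basis_vec m) (Suc m)"
        using ann basis_vec_in_vecs[of m n] less.prems by (simp add: annihilator_def)
      also have "\<dots> = (\<Sum>i=1..m. a i * basis_vec m m * c i m (Suc m))"
        by (rule amult_next_coord_right[OF c less.prems]) (simp add: basis_vec_def)
      also have "\<dots> = (\<Sum>i\<in>{m}. a i * basis_vec m m * c i m (Suc m))"
        by (intro sum.mono_neutral_right) (use less in auto)
      also have "\<dots> = a m"
        using in_R_square_coeff[OF R less.prems] by (simp add: basis_vec_def)
      finally show ?case by simp
    qed
    have "a = (\<lambda>k. a n * basis_vec n k)"
    proof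
      fix k show "a k = a n * basis_vec n k"
        using below a by (cases "k = 0 \<or> n < k") (auto simp: vecs_def basis_vec_def)
    qed
    then show "a \<in> {(\<lambda>k. t * basis_vec n k) | t. True}" by blast
  qed
  show "{(\<lambda>k. t * basis_vec n k) | t. True} \<subseteq> annihilator n c"
  proof
    fix a assume "a \<in> {(\<lambda>k. t * basis_vec n k) | t. True}"
    then obtain t where t: "a = (\<lambda>k. t * basis_vec n k)" by blast
    have a: "a \<in> vecs n" using t n by (auto simp: vecs_def basis_vec_def)
    have below: "\<forall>i<n. a i = 0" using t by (simp add: basis_vec_def)
    have "amult n c a b = (\<lambda>_. 0) \<and> amult n c b a = (\<lambda>_. 0)" for b
      using amult_cong_below[OF c below, of b b] amult_cong_below[OF c _ below, of b b]
      by (simp add: amult_zero_left amult_zero_right)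
    then show "a \<in> annihilator n c" using a by (simp add: annihilator_def)
  qed
qed

text \<open>Since products only see the first n-1 coordinates and always vanish in the first one,
  adding a multiple of the first coordinate to the last one respects the multiplication.\<close>

lemma shear_is_automorphism:
  assumes c: "strictly_ascending n c" and n: "2 \<le> n"
    and f: "\<forall>a\<in>vecs n. f a = (\<lambda>k. a k + x * a 1 * basis_vec n k)"
  shows "is_automorphism n c f"
proof -
  have first: "f a 1 = a 1" if "a \<in> vecs n" for a
    using f that n by (simp add: basis_vec_def)
  have f_vecs: "f a \<in> vecs n" if "a \<in> vecs n" for a
    using f that by (auto simp: vecs_def basis_vec_def)
  have "inj_on f (vecs n)"
  proof (rule inj_onI)
    fix a b assume a: "a \<in> vecs n" and b: "b \<in> vecs n" and eq: "f a = f b"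
    then have "a 1 = b 1" using first by metis
    show "a = b"
    proof
      fix k show "a k = b k"
        using fun_cong[OF eq, of k] f a b \<open>a 1 = b 1\<close> by simp
    qed
  qed
  moreover have "vecs n \<subseteq> f ` vecs n"
  proof
    fix b assume b: "b \<in> vecs n"
    define a where "a = (\<lambda>k. b k - x * b 1 * basis_vec n k)"
    have a: "a \<in> vecs n" using b by (auto simp: a_def vecs_def basis_vec_def)
    have "a 1 = b 1" using n by (simp add: a_def basis_vec_def)
    then have "f a = b" using f a by (auto simp: a_def)
    then show "b \<in> f ` vecs n" using a by blast
  qed
  ultimately have "bij_betw f (vecs n) (vecs n)"
    unfolding bij_betw_def using f_vecs by blast
  moreover have "f (\<lambda>k. a k + b k) = (\<lambda>k. f a k + f b k)" if "a \<in> vecs n" "b \<in> vecs n" for a b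
    using f that by (simp add: vecs_def algebra_simps)
  moreover have "f (\<lambda>k. t * a k) = (\<lambda>k. t * f a k)" if "a \<in> vecs n" for a t
    using f that by (simp add: vecs_def algebra_simps)
  moreover have "f (amult n c a b) = amult n c (f a) (f b)" if "a \<in> vecs n" "b \<in> vecs n" for a b
  proof -
    have "amult n c a b 1 = 0"
      by (rule amult_eq_0_below[OF c, of 1 _ 1]) (use that in \<open>auto simp: vecs_def\<close>)
    then have "f (amult n c a b) = amult n c a b" using f amult_in_vecs by simp
    also have "\<dots> = amult n c (f a) (f b)"
      by (rule amult_cong_below[OF c]) (use f that in \<open>auto simp: basis_vec_def\<close>)
    finally show ?thesis .
  qed
  ultimately show ?thesis unfolding is_automorphism_def by blast
qed

locale R_automorphism =
  fixes n :: nat and c :: sconst and f :: "(nat \<Rightarrow> complex) \<Rightarrow> nat \<Rightarrow> complex"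
  assumes n_ge_3: "3 \<le> n" and R: "in_R n c" and aut: "is_automorphism n c f"
begin

definition basis_image :: "nat \<Rightarrow> nat \<Rightarrow> complex" where
  "basis_image i = f (basis_vec i)"

lemma ascending: "strictly_ascending n c"
  using in_R_strictly_ascending[OF R] .

lemma expand: "a \<in> vecs n \<Longrightarrow> f a = (\<lambda>k. \<Sum>i=1..n. a i * basis_image i k)"
  unfolding basis_image_def
  by (rule additive_homogeneous_on_vecs_expand) (use aut in \<open>auto simp: is_automorphism_def\<close>)

lemma f_zero: "f (\<lambda>_. 0) = (\<lambda>_. 0)"
  using expand[OF zero_in_vecs] by simp

lemma basis_image_in_vecs: "i \<in> {1..n} \<Longrightarrow> basis_image i \<in> vecs n"
  using aut basis_vec_in_vecs bij_betw_apply
  unfolding basis_image_def is_automorphism_def by metis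

lemma amult_basis_image:
  assumes "i \<in> {1..n}" and "j \<in> {1..n}"
  shows "amult n c (basis_image i) (basis_image j) = (\<lambda>k. \<Sum>l=1..n. c i j l * basis_image l k)"
proof -
  have "amult n c (basis_image i) (basis_image j) = f (amult n c (basis_vec i) (basis_vec j))"
    using aut assms basis_vec_in_vecs by (simp add: basis_image_def is_automorphism_def)
  also have "\<dots> = (\<lambda>k. \<Sum>l=1..n. (if l \<in> {1..n} then c i j l else 0) * basis_image l k)"
    unfolding amult_basis_vec[OF assms] by (rule expand) (auto simp: vecs_def)
  finally show ?thesis by simp
qed

lemma basis_image_Suc:
  assumes "1 \<le> i" and "i < n"
  shows "basis_image (Suc i) = amult n c (basis_image i) (basis_image i)"
proof -
  have "f (amult n c (basis_vec i) (basis_vec i)) = amult n c (basis_image i) (basis_image i)"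
    using aut assms basis_vec_in_vecs[of i n] by (simp add: basis_image_def is_automorphism_def)
  then show ?thesis using amult_square_basis_vec[OF R assms] by (simp add: basis_image_def)
qed

lemma basis_image_triangular:
  assumes "1 \<le> i" and "i \<le> n"
  shows "(\<forall>k<i. basis_image i k = 0) \<and> basis_image i i = basis_image 1 1 ^ 2 ^ (i - 1)"
  using assms
proof (induction i)
  case (Suc i)
  show ?case
  proof (cases "i = 0")
    case True
    have "basis_image 1 0 = 0" using basis_image_in_vecs[of 1] n_ge_3 by (simp add: vecs_def)
    then show ?thesis using True by simp
  next
    case False
    then have i: "1 \<le> i" "i < n" using Suc.prems by auto
    have below: "\<forall>k<i. basis_image i k = 0"
      and diag: "basis_image i i = basis_image 1 1 ^ 2 ^ (i - 1)"
      using Suc.IH i by auto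
    have below_Suc: "\<forall>k<Suc i. basis_image (Suc i) k = 0"
      using amult_eq_0_below[OF ascending below below] basis_image_Suc[OF i] by auto
    have exponent: "(2::nat) ^ (Suc i - 1) = 2 ^ (i - 1) + 2 ^ (i - 1)"
      using i by (cases i) auto
    have "basis_image (Suc i) (Suc i)
        = (\<Sum>j=1..i. basis_image i i * basis_image i j * c i j (Suc i))"
      unfolding basis_image_Suc[OF i] by (rule amult_next_coord_left[OF ascending i below])
    also have "\<dots> = (\<Sum>j\<in>{i}. basis_image i i * basis_image i j * c i j (Suc i))"
      by (intro sum.mono_neutral_right) (use below i in auto)
    also have "\<dots> = basis_image 1 1 ^ 2 ^ (Suc i - 1)"
      unfolding exponent using diag in_R_square_coeff[OF R i] by (simp add: power_add)
    finally show ?thesis using below_Suc by simp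
  qed
qed simp

lemma basis_image_below_diag: "k < l \<Longrightarrow> l \<in> {1..n} \<Longrightarrow> basis_image l k = 0"
  using basis_image_triangular[of l] by auto

lemma basis_image_1_1_nonzero: "basis_image 1 1 \<noteq> 0"
proof
  assume "basis_image 1 1 = 0"
  then have "basis_image n n = 0" using basis_image_triangular[of n] n_ge_3 by simp
  then have "basis_image n = (\<lambda>_. 0)"
  proof (intro ext)
    fix k show "basis_image n k = 0"
      using \<open>basis_image n n = 0\<close> basis_image_below_diag[of k n] basis_image_in_vecs[of n] n_ge_3
      by (cases k n rule: linorder_cases) (auto simp: vecs_def)
  qed
  then have "f (basis_vec n) = f (\<lambda>_. 0)"
    by (simp add: basis_image_def f_zero)
  then have "basis_vec n = (\<lambda>_. 0)"
    using aut basis_vec_in_vecs[of n n] zero_in_vecs n_ge_3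
    by (auto simp: is_automorphism_def bij_betw_def inj_on_def)
  then show False by (metis basis_vec_def one_neq_zero)
qed

text \<open>Comparing the third coordinates of f(e_1 e_2) and f(e_1) f(e_2).\<close>

lemma basis_image_1_2: "basis_image 1 2 = 0"
proof -
  have "amult n c (basis_image 1) (basis_image 2) 3 = (\<Sum>l=1..n. c 1 2 l * basis_image l 3)"
    using amult_basis_image[of 1 2] n_ge_3 by simp
  also have "\<dots> = c 1 2 3 * basis_image 3 3"
    by (rule amult_next_coord_tail[OF ascending basis_image_below_diag]) (use n_ge_3 in auto)
  also have "c 1 2 3 = 0"
    using in_R_coeff_1_next[OF R, of 2] n_ge_3 by (simp add: numeral_3_eq_3)
  finally have "0 = amult n c (basis_image 1) (basis_image 2) (Suc 2)" by simp
  also have "\<dots> = (\<Sum>i=1..2. basis_image 1 i * basis_image 2 2 * c i 2 (Suc 2))"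
    by (rule amult_next_coord_right[OF ascending]) (use n_ge_3 basis_image_below_diag in auto)
  also have "\<dots> = basis_image 1 2 * basis_image 1 1 ^ 2"
    using in_R_coeff_1_next[OF R, of 2] in_R_square_coeff[OF R, of 2] basis_image_triangular[of 2]
      n_ge_3 by (simp add: numeral_2_eq_2)
  finally show ?thesis using basis_image_1_1_nonzero by simp
qed

text \<open>Comparing the third coordinates of f(e_2 e_1) and f(e_2) f(e_1) gives d^4 = d^3
  for the diagonal entry d of f(e_1).\<close>

lemma basis_image_1_1: "basis_image 1 1 = 1"
proof -
  have "amult n c (basis_image 2) (basis_image 1) 3 = (\<Sum>l=1..n. c 2 1 l * basis_image l 3)"
    using amult_basis_image[of 2 1] n_ge_3 by simp
  also have "\<dots> = c 2 1 3 * basis_image 3 3"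
    by (rule amult_next_coord_tail[OF ascending basis_image_below_diag]) (use n_ge_3 in auto)
  also have "\<dots> = basis_image 1 1 ^ 4"
    using in_R_coeff_213[OF R] basis_image_triangular[of 3] n_ge_3 by simp
  finally have "basis_image 1 1 ^ 4 = amult n c (basis_image 2) (basis_image 1) (Suc 2)" by simp
  also have "\<dots> = (\<Sum>j=1..2. basis_image 2 2 * basis_image 1 j * c 2 j (Suc 2))"
    by (rule amult_next_coord_left[OF ascending]) (use n_ge_3 basis_image_below_diag in auto)
  also have "\<dots> = basis_image 1 1 ^ 3"
    using in_R_coeff_213[OF R] basis_image_1_2 basis_image_triangular[of 2] n_ge_3
    by (simp add: numeral_2_eq_2 numeral_3_eq_3 power2_eq_square power3_eq_cube)
  finally have "basis_image 1 1 ^ 3 * (basis_image 1 1 - 1) = 0"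
    by (simp add: algebra_simps power_Suc[symmetric] del: power_Suc)
  then show ?thesis using basis_image_1_1_nonzero by simp
qed

lemma basis_image_diag: "m \<in> {1..n} \<Longrightarrow> basis_image m m = 1"
  using basis_image_triangular[of m] basis_image_1_1 by simp

lemma basis_image_1_middle:
  assumes "2 \<le> m" and "m < n"
  shows "basis_image 1 m = 0"
  using assms
proof (induction m rule: less_induct)
  case (less m)
  then have m: "1 \<le> m" "m < n" by auto
  have "amult n c (basis_image 1) (basis_image m) (Suc m) = (\<Sum>l=1..n. c 1 m l * basis_image l (Suc m))"
    using amult_basis_image[of 1 m] m by simp
  also have "\<dots> = c 1 m (Suc m) * basis_image (Suc m) (Suc m)"
    by (rule amult_next_coord_tail[OF ascending basis_image_below_diag]) (use m in auto)
  also have "c 1 m (Suc m) = 0" using in_R_coeff_1_next[OF R less.prems] .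
  finally have "0 = amult n c (basis_image 1) (basis_image m) (Suc m)" by simp
  also have "\<dots> = (\<Sum>i=1..m. basis_image 1 i * basis_image m m * c i m (Suc m))"
    by (rule amult_next_coord_right[OF ascending m]) (use basis_image_below_diag m in auto)
  also have "\<dots> = (\<Sum>i\<in>{m}. basis_image 1 i * basis_image m m * c i m (Suc m))"
  proof (rule sum.mono_neutral_right)
    show "\<forall>i\<in>{1..m} - {m}. basis_image 1 i * basis_image m m * c i m (Suc m) = 0"
    proof
      fix i assume i: "i \<in> {1..m} - {m}"
      show "basis_image 1 i * basis_image m m * c i m (Suc m) = 0"
      proof (cases "i = 1")
        case True
        then show ?thesis using in_R_coeff_1_next[OF R less.prems] by simp
      next
        case False
        then show ?thesis using less.IH i m by simp
      qed
    qed
  qed (use m in auto)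
  also have "\<dots> = basis_image 1 m"
    using basis_image_diag[of m] in_R_square_coeff[OF R m] m by simp
  finally show ?case by simp
qed

lemma basis_image_1_off_last: "k \<noteq> n \<Longrightarrow> basis_image 1 k = basis_vec 1 k"
  using basis_image_1_middle[of k] basis_image_1_1 basis_image_in_vecs[of 1] n_ge_3
  by (cases "k = 0 \<or> n < k") (auto simp: vecs_def basis_vec_def)

text \<open>The last coordinate of f(e_1) does not enter products, so squaring propagates
  f(e_i) = e_i from i = 2 upwards.\<close>

lemma basis_image_ge_2:
  assumes "2 \<le> i" and "i \<le> n"
  shows "basis_image i = basis_vec i"
  using assms
proof (induction i)
  case (Suc i)
  then have i: "1 \<le> i" "i < n" by auto
  have agree: "\<forall>k<n. basis_image i k = basis_vec i k"
  proof (cases "i = 1")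
    case True
    then show ?thesis using basis_image_1_off_last by simp
  next
    case False
    then show ?thesis using Suc.IH i by simp
  qed
  have "basis_image (Suc i) = amult n c (basis_image i) (basis_image i)"
    using basis_image_Suc[OF i] .
  also have "\<dots> = amult n c (basis_vec i) (basis_vec i)"
    using amult_cong_below[OF ascending agree agree] .
  also have "\<dots> = basis_vec (Suc i)"
    using amult_square_basis_vec[OF R i] .
  finally show ?case .
qed simp

lemma automorphism_is_shear: "\<forall>a\<in>vecs n. f a = (\<lambda>k. a k + basis_image 1 n * a 1 * basis_vec n k)"
proof (intro ballI ext)
  fix a k assume a: "a \<in> vecs n"
  have "f a k = (\<Sum>i=1..n. a i * basis_image i k)"
    using expand[OF a] by simp
  also have "\<dots> = (\<Sum>i=1..n. a i * basis_vec i k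
                        + (if i = 1 then basis_image 1 n * a 1 * basis_vec n k else 0))"
  proof (rule sum.cong)
    fix i assume "i \<in> {1..n}"
    then show "a i * basis_image i k
        = a i * basis_vec i k + (if i = 1 then basis_image 1 n * a 1 * basis_vec n k else 0)"
      using basis_image_1_off_last[of k] basis_image_ge_2[of i] n_ge_3
      by (cases "i = 1"; cases "k = n") (simp_all add: basis_vec_def)
  qed simp
  also have "\<dots> = (\<Sum>i=1..n. a i * basis_vec i k) + basis_image 1 n * a 1 * basis_vec n k"
    using n_ge_3 by (simp add: sum.distrib)
  also have "\<dots> = a k + basis_image 1 n * a 1 * basis_vec n k"
    unfolding sum_basis_vec_coords[OF a] ..
  finally show "f a k = a k + basis_image 1 n * a 1 * basis_vec n k" .
qed

end

theorem mainTheorem11: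
  fixes n :: nat and c :: sconst
  assumes "n \<ge> 3" and "in_R n c"
  shows "annihilator n c = {(\<lambda>k. t * basis_vec n k) | t. True}
       \<and> (\<forall>f. is_automorphism n c f \<longleftrightarrow>
              (\<exists>x::complex. \<forall>a\<in>vecs n. f a = (\<lambda>k. a k + x * a 1 * basis_vec n k)))"
proof (intro conjI allI iffI)
  show "annihilator n c = {(\<lambda>k. t * basis_vec n k) | t. True}"
    using annihilator_R[OF assms] .
next
  fix f assume "is_automorphism n c f"
  then interpret R_automorphism n c f using assms by unfold_locales
  show "\<exists>x. \<forall>a\<in>vecs n. f a = (\<lambda>k. a k + x * a 1 * basis_vec n k)"
    using automorphism_is_shear by blast
next
  fix f assume "\<exists>x. \<forall>a\<in>vecs n. f a = (\<lambda>k. a k + x * a 1 * basis_vec n k)"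
  then show "is_automorphism n c f"
    using shear_is_automorphism in_R_strictly_ascending[OF assms(2)] assms(1) by fastforce
qed

end
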